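(* Let $X:\mathbb{R}^d\to\mathbb{R}_+$ and $M:\mathbb{R}^d\to\mathbb{R}^d$ be random mappings such that $X(ct)=X(t)$ and $M(ct)=cM(t)$ for all $t\in\mathbb{R}^d\setminus\{0\}$ and all scalars $c>0$, and suppose there is $a>0$ with $$\sup_{t\in\mathbb{R}^d\setminus\{0\}}\mathbb{E}[X(t)]<1\quad\text{and}\quad\sup_{t\in\mathbb{S}^{d-1}}\mathbb{E}[|M(t)|^{-a}X(t)]<1.$$ Let $\varphi:\mathbb{R}^d\to\mathbb{R}_+$ be bounded and suppose there is $c_0>0$ with $\varphi(t)\le\mathbb{E}[\varphi(M(t))X(t)]$ for all $t\in\mathbb{R}^d$ with $|t|>c_0$. Then $\varphi(t)=O(|t|^{-a})$ as $|t|\to\infty$.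
   Context: $|x|=\sum_i|x_i|$ is the $L^1$ norm on $\mathbb{R}^d$ and $\mathbb{S}^{d-1}=\{x\in\mathbb{R}^d:|x|=1\}$. *)

theory Defs
  imports "HOL-Probability.Probability"
begin

definition l1norm :: "real ^ 'n \<Rightarrow> real" where
  "l1norm x = (\<Sum>i\<in>UNIV. \<bar>x $ i\<bar>)"

definition l1sphere :: "(real ^ 'n) set" where
  "l1sphere = {x. l1norm x = 1}"

text \<open>|x|^(-a) as an extended nonnegative real, with the convention |0|^(-a) = infinity.\<close>
definition l1negpow :: "real \<Rightarrow> real ^ 'n \<Rightarrow> ennreal" where
  "l1negpow a x = (if l1norm x = 0 then \<infinity> else ennreal (l1norm x powr (- a)))"

end

theory Submission
  imports Defs
begin

text \<open>Let \<open>\<theta> < 1\<close> bound both suprema. The barrier \<open>\<psi> t = min B (K |t| powr -a)\<close>, with \<open>B\<close> a bound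
  of \<open>\<phi>\<close> and \<open>K = B c0 powr a\<close>, dominates \<open>\<phi>\<close> on the ball \<open>|t| \<le> c0\<close>, and by homogeneity it is a
  supersolution of the recursion: \<open>E[\<psi>(M t) X t] \<le> \<theta> \<psi> t\<close>. Hence if \<open>\<phi> \<le> \<psi> + e\<close> everywhere,
  the recursive inequality improves this to \<open>\<phi> \<le> \<psi> + \<theta> e\<close>. Starting from \<open>e = B\<close> and iterating
  gives \<open>\<phi> \<le> \<psi> \<le> K |t| powr -a\<close>.\<close>

lemma le_if_error_contracts:
  fixes f g :: "'a \<Rightarrow> real"
  assumes "0 \<le> \<theta>" "\<theta> < 1" "0 \<le> B" "\<And>v. f v \<le> g v + B"
    and contract: "\<And>e v. 0 \<le> e \<Longrightarrow> (\<And>w. f w \<le> g w + e) \<Longrightarrow> f v \<le> g v + \<theta> * e"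
  shows "f v \<le> g v"
proof -
  have bound: "f v \<le> g v + \<theta> ^ n * B" for n v
  proof (induction n arbitrary: v)
    case 0
    show ?case using assms(4) by simp
  next
    case (Suc n)
    have "f v \<le> g v + \<theta> * (\<theta> ^ n * B)"
      by (rule contract) (use Suc.IH assms(1,3) in auto)
    then show ?case by (simp add: mult.assoc)
  qed
  have "(\<lambda>n. g v + \<theta> ^ n * B) \<longlonglongrightarrow> g v + 0 * B"
    using assms(1,2) by (intro tendsto_intros LIMSEQ_power_zero) auto
  then have "f v \<le> g v + 0 * B"
    by (rule LIMSEQ_le_const) (use bound in auto)
  then show ?thesis by simp
qed

lemma ennreal_lt_1_common_bound:
  fixes x y :: ennreal
  assumes "x < 1" "y < 1"
  obtains \<theta> where "0 \<le> \<theta>" "\<theta> < 1" "x \<le> ennreal \<theta>" "y \<le> ennreal \<theta>"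
proof
  show "0 \<le> max (enn2real x) (enn2real y)" by (simp add: le_max_iff_disj)
  show "max (enn2real x) (enn2real y) < 1" using assms by (cases x; cases y) auto
  show "x \<le> ennreal (max (enn2real x) (enn2real y))" using assms by (cases x) auto
  show "y \<le> ennreal (max (enn2real x) (enn2real y))" using assms by (cases y) auto
qed

lemma l1norm_nonneg: "0 \<le> l1norm x"
  unfolding l1norm_def by (simp add: sum_nonneg)

lemma l1norm_eq_0_iff: "l1norm x = 0 \<longleftrightarrow> x = 0"
  unfolding l1norm_def by (simp add: sum_nonneg_eq_0_iff vec_eq_iff)

lemma l1norm_pos_iff: "0 < l1norm x \<longleftrightarrow> x \<noteq> 0"
  using l1norm_nonneg[of x] l1norm_eq_0_iff[of x] by linarith

lemma l1norm_scaleR: "l1norm (c *\<^sub>R x) = \<bar>c\<bar> * l1norm x"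
  unfolding l1norm_def by (simp add: abs_mult sum_distrib_left)

lemma borel_measurable_l1norm [measurable]: "l1norm \<in> borel_measurable borel"
  unfolding l1norm_def by measurable

lemma borel_measurable_l1negpow [measurable]: "l1negpow a \<in> borel_measurable borel"
  unfolding l1negpow_def[abs_def] by measurable

lemma l1negpow_scaleR:
  "0 < c \<Longrightarrow> l1negpow a (c *\<^sub>R x) = ennreal (c powr - a) * l1negpow a x"
  unfolding l1negpow_def l1norm_scaleR using l1norm_nonneg[of x]
  by (auto simp: powr_mult ennreal_mult)

lemma nn_integral_l1negpow_le_SUP_l1sphere:
  fixes X :: "'w \<Rightarrow> real ^ 'n \<Rightarrow> real" and M :: "'w \<Rightarrow> real ^ 'n \<Rightarrow> real ^ 'n"
  assumes X_meas: "\<And>t. (\<lambda>\<omega>. X \<omega> t) \<in> borel_measurable P"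
    and M_meas: "\<And>t. (\<lambda>\<omega>. M \<omega> t) \<in> borel_measurable P"
    and X_hom: "\<And>\<omega> t c. t \<noteq> 0 \<Longrightarrow> c > 0 \<Longrightarrow> X \<omega> (c *\<^sub>R t) = X \<omega> t"
    and M_hom: "\<And>\<omega> t c. t \<noteq> 0 \<Longrightarrow> c > 0 \<Longrightarrow> M \<omega> (c *\<^sub>R t) = c *\<^sub>R M \<omega> t"
    and "t \<noteq> 0"
  shows "(\<integral>\<^sup>+ \<omega>. l1negpow a (M \<omega> t) * ennreal (X \<omega> t) \<partial>P)
    \<le> ennreal (l1norm t powr - a) * (SUP s\<in>l1sphere. \<integral>\<^sup>+ \<omega>. l1negpow a (M \<omega> s) * ennreal (X \<omega> s) \<partial>P)"
proof -
  note [measurable] = X_meas M_meas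
  define l where "l = l1norm t"
  define u where "u = (1 / l) *\<^sub>R t"
  have "0 < l" unfolding l_def using \<open>t \<noteq> 0\<close> by (simp add: l1norm_pos_iff)
  then have t_eq: "t = l *\<^sub>R u" and "u \<noteq> 0" and u_sphere: "u \<in> l1sphere"
    using \<open>t \<noteq> 0\<close> by (auto simp: u_def l_def l1sphere_def l1norm_scaleR)
  have "(\<integral>\<^sup>+ \<omega>. l1negpow a (M \<omega> t) * ennreal (X \<omega> t) \<partial>P)
      = (\<integral>\<^sup>+ \<omega>. ennreal (l powr - a) * (l1negpow a (M \<omega> u) * ennreal (X \<omega> u)) \<partial>P)"
    unfolding t_eq using \<open>0 < l\<close> \<open>u \<noteq> 0\<close> by (simp add: M_hom X_hom l1negpow_scaleR mult.assoc)
  also have "\<dots> = ennreal (l powr - a) * (\<integral>\<^sup>+ \<omega>. l1negpow a (M \<omega> u) * ennreal (X \<omega> u) \<partial>P)"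
    by (rule nn_integral_cmult) measurable
  also have "\<dots> \<le> ennreal (l powr - a) * (SUP s\<in>l1sphere. \<integral>\<^sup>+ \<omega>. l1negpow a (M \<omega> s) * ennreal (X \<omega> s) \<partial>P)"
    using u_sphere by (intro mult_left_mono SUP_upper) auto
  finally show ?thesis unfolding l_def .
qed

definition tail_barrier :: "real \<Rightarrow> real \<Rightarrow> real \<Rightarrow> real ^ 'n \<Rightarrow> real" where
  "tail_barrier a K B v = (if v = 0 then B else min B (K * l1norm v powr - a))"

lemma borel_measurable_tail_barrier [measurable]: "tail_barrier a K B \<in> borel_measurable borel"
  unfolding tail_barrier_def[abs_def] by measurable

lemma tail_barrier_le: "tail_barrier a K B v \<le> B"
  by (simp add: tail_barrier_def)

lemma tail_barrier_le_l1norm_powr: "v \<noteq> 0 \<Longrightarrow> tail_barrier a K B v \<le> K * l1norm v powr - a"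
  by (simp add: tail_barrier_def)

lemma tail_barrier_nonneg: "0 \<le> B \<Longrightarrow> 0 \<le> K \<Longrightarrow> 0 \<le> tail_barrier a K B v"
  by (simp add: tail_barrier_def)

lemma tail_barrier_le_l1negpow:
  "0 < K \<Longrightarrow> ennreal (tail_barrier a K B v) \<le> ennreal K * l1negpow a v"
  by (cases "v = 0")
    (auto simp: tail_barrier_def l1negpow_def l1norm_eq_0_iff ennreal_mult[symmetric] intro!: ennreal_leI)

lemma tail_barrier_eq_bound:
  assumes "0 < a" "0 < c0" "0 \<le> B" "l1norm v \<le> c0"
  shows "tail_barrier a (B * c0 powr a) B v = B"
proof (cases "v = 0")
  case False
  then have "0 < l1norm v" by (simp add: l1norm_pos_iff)
  then have "l1norm v powr a \<le> c0 powr a"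
    using assms by (intro powr_mono2) auto
  then have "B * 1 \<le> B * (c0 powr a / l1norm v powr a)"
    using \<open>0 < l1norm v\<close> assms(3) by (intro mult_left_mono) auto
  then show ?thesis
    using False by (simp add: tail_barrier_def powr_minus divide_inverse mult.assoc)
qed (simp add: tail_barrier_def)

text \<open>Each bound of the barrier is integrated against its own moment assumption; the smaller
  result is \<open>\<theta>\<close> times the barrier.\<close>

lemma nn_integral_tail_barrier_le:
  fixes X :: "'w \<Rightarrow> real ^ 'n \<Rightarrow> real" and M :: "'w \<Rightarrow> real ^ 'n \<Rightarrow> real ^ 'n"
  assumes [measurable]: "(\<lambda>\<omega>. X \<omega> t) \<in> borel_measurable P" "(\<lambda>\<omega>. M \<omega> t) \<in> borel_measurable P"
    and "0 < K" "0 \<le> B" "0 \<le> \<theta>" "t \<noteq> 0"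
    and moment_X: "(\<integral>\<^sup>+ \<omega>. ennreal (X \<omega> t) \<partial>P) \<le> ennreal \<theta>"
    and moment_MX: "(\<integral>\<^sup>+ \<omega>. l1negpow a (M \<omega> t) * ennreal (X \<omega> t) \<partial>P) \<le> ennreal (l1norm t powr - a) * ennreal \<theta>"
  shows "(\<integral>\<^sup>+ \<omega>. ennreal (tail_barrier a K B (M \<omega> t)) * ennreal (X \<omega> t) \<partial>P)
    \<le> ennreal (\<theta> * tail_barrier a K B t)"
proof -
  let ?I = "\<integral>\<^sup>+ \<omega>. ennreal (tail_barrier a K B (M \<omega> t)) * ennreal (X \<omega> t) \<partial>P"
  have "?I \<le> (\<integral>\<^sup>+ \<omega>. ennreal B * ennreal (X \<omega> t) \<partial>P)"
    by (intro nn_integral_mono mult_right_mono ennreal_leI tail_barrier_le) simp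
  also have "\<dots> = ennreal B * (\<integral>\<^sup>+ \<omega>. ennreal (X \<omega> t) \<partial>P)"
    by (rule nn_integral_cmult) measurable
  also have "\<dots> \<le> ennreal B * ennreal \<theta>"
    using moment_X by (rule mult_left_mono) simp
  finally have le_B: "?I \<le> ennreal (\<theta> * B)"
    using \<open>0 \<le> B\<close> \<open>0 \<le> \<theta>\<close> by (simp add: ennreal_mult mult.commute)
  have "?I \<le> (\<integral>\<^sup>+ \<omega>. ennreal K * (l1negpow a (M \<omega> t) * ennreal (X \<omega> t)) \<partial>P)"
    unfolding mult.assoc[symmetric]
    by (intro nn_integral_mono mult_right_mono tail_barrier_le_l1negpow \<open>0 < K\<close>) simp
  also have "\<dots> = ennreal K * (\<integral>\<^sup>+ \<omega>. l1negpow a (M \<omega> t) * ennreal (X \<omega> t) \<partial>P)"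
    by (rule nn_integral_cmult) measurable
  also have "\<dots> \<le> ennreal K * (ennreal (l1norm t powr - a) * ennreal \<theta>)"
    using moment_MX by (rule mult_left_mono) simp
  finally have le_K: "?I \<le> ennreal (\<theta> * (K * l1norm t powr - a))"
    using \<open>0 < K\<close> \<open>0 \<le> \<theta>\<close> by (simp add: ennreal_mult mult_ac)
  show ?thesis
    using le_B le_K \<open>t \<noteq> 0\<close> by (simp add: tail_barrier_def min_def)
qed

lemma recursive_le_supersolution_step:
  fixes \<phi> \<psi> :: "'a::topological_space \<Rightarrow> real"
  assumes [measurable]: "(\<lambda>\<omega>. X \<omega> t) \<in> borel_measurable P" "(\<lambda>\<omega>. M \<omega> t) \<in> borel_measurable P"
    "\<psi> \<in> borel_measurable borel"
    and X_nonneg: "\<And>\<omega>. 0 \<le> X \<omega> t"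
    and \<psi>_nonneg: "\<And>v. 0 \<le> \<psi> v"
    and "0 \<le> e" and error: "\<And>v. \<phi> v \<le> \<psi> v + e"
    and recursion: "ennreal (\<phi> t) \<le> (\<integral>\<^sup>+ \<omega>. ennreal (\<phi> (M \<omega> t) * X \<omega> t) \<partial>P)"
    and moment_X: "(\<integral>\<^sup>+ \<omega>. ennreal (X \<omega> t) \<partial>P) \<le> ennreal \<theta>"
    and supersolution: "(\<integral>\<^sup>+ \<omega>. ennreal (\<psi> (M \<omega> t)) * ennreal (X \<omega> t) \<partial>P) \<le> ennreal (\<theta> * \<psi> t)"
    and "0 \<le> \<theta>"
  shows "\<phi> t \<le> \<theta> * (\<psi> t + e)"
proof -
  have "ennreal (\<phi> t) \<le> (\<integral>\<^sup>+ \<omega>. ennreal (\<psi> (M \<omega> t)) * ennreal (X \<omega> t) + ennreal e * ennreal (X \<omega> t) \<partial>P)"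
  proof (rule order_trans[OF recursion nn_integral_mono])
    fix \<omega>
    have "\<phi> (M \<omega> t) * X \<omega> t \<le> \<psi> (M \<omega> t) * X \<omega> t + e * X \<omega> t"
      using mult_right_mono[OF error X_nonneg] by (simp add: distrib_right)
    then have "ennreal (\<phi> (M \<omega> t) * X \<omega> t) \<le> ennreal (\<psi> (M \<omega> t) * X \<omega> t) + ennreal (e * X \<omega> t)"
      using \<psi>_nonneg X_nonneg \<open>0 \<le> e\<close> by (simp add: ennreal_leI flip: ennreal_plus)
    then show "ennreal (\<phi> (M \<omega> t) * X \<omega> t) \<le> ennreal (\<psi> (M \<omega> t)) * ennreal (X \<omega> t) + ennreal e * ennreal (X \<omega> t)"
      using \<psi>_nonneg X_nonneg \<open>0 \<le> e\<close> by (simp add: ennreal_mult)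
  qed
  also have "\<dots> = (\<integral>\<^sup>+ \<omega>. ennreal (\<psi> (M \<omega> t)) * ennreal (X \<omega> t) \<partial>P) + ennreal e * (\<integral>\<^sup>+ \<omega>. ennreal (X \<omega> t) \<partial>P)"
    by (simp add: nn_integral_add nn_integral_cmult[of "\<lambda>\<omega>. ennreal (X \<omega> t)"])
  also have "\<dots> \<le> ennreal (\<theta> * \<psi> t) + ennreal e * ennreal \<theta>"
    using supersolution moment_X by (intro add_mono mult_left_mono) auto
  also have "\<dots> = ennreal \<theta> * (ennreal (\<psi> t) + ennreal e)"
    using \<psi>_nonneg \<open>0 \<le> \<theta>\<close> by (simp add: ennreal_mult distrib_left mult.commute)
  also have "\<dots> = ennreal (\<theta> * (\<psi> t + e))"
    using \<psi>_nonneg \<open>0 \<le> e\<close> \<open>0 \<le> \<theta>\<close> by (simp add: ennreal_mult ennreal_plus)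
  finally show ?thesis
    using \<psi>_nonneg \<open>0 \<le> e\<close> \<open>0 \<le> \<theta>\<close> by (simp add: ennreal_le_iff)
qed

lemma le_tail_barrier:
  fixes X :: "'w \<Rightarrow> real ^ 'n \<Rightarrow> real" and M :: "'w \<Rightarrow> real ^ 'n \<Rightarrow> real ^ 'n"
    and \<phi> :: "real ^ 'n \<Rightarrow> real"
  assumes X_meas: "\<And>t. (\<lambda>\<omega>. X \<omega> t) \<in> borel_measurable P"
    and M_meas: "\<And>t. (\<lambda>\<omega>. M \<omega> t) \<in> borel_measurable P"
    and X_nonneg: "\<And>\<omega> t. 0 \<le> X \<omega> t"
    and "0 < a" "0 < c0" "0 < B" "0 \<le> \<theta>" "\<theta> < 1"
    and moment_X: "\<And>t. t \<noteq> 0 \<Longrightarrow> (\<integral>\<^sup>+ \<omega>. ennreal (X \<omega> t) \<partial>P) \<le> ennreal \<theta>"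
    and moment_MX: "\<And>t. t \<noteq> 0 \<Longrightarrow>
      (\<integral>\<^sup>+ \<omega>. l1negpow a (M \<omega> t) * ennreal (X \<omega> t) \<partial>P) \<le> ennreal (l1norm t powr - a) * ennreal \<theta>"
    and \<phi>_le: "\<And>t. \<phi> t \<le> B"
    and recursion: "\<And>t. c0 < l1norm t \<Longrightarrow>
      ennreal (\<phi> t) \<le> (\<integral>\<^sup>+ \<omega>. ennreal (\<phi> (M \<omega> t) * X \<omega> t) \<partial>P)"
  shows "\<phi> t \<le> tail_barrier a (B * c0 powr a) B t"
proof -
  define \<psi> :: "real ^ 'n \<Rightarrow> real" where "\<psi> = tail_barrier a (B * c0 powr a) B"
  have "0 < B * c0 powr a" using \<open>0 < B\<close> \<open>0 < c0\<close> by simp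
  then have \<psi>_nonneg: "\<And>v. 0 \<le> \<psi> v"
    unfolding \<psi>_def using \<open>0 < B\<close> by (simp add: tail_barrier_nonneg)
  have contract: "\<phi> t \<le> \<psi> t + \<theta> * e" if "0 \<le> e" "\<And>v. \<phi> v \<le> \<psi> v + e" for t e
  proof (cases "c0 < l1norm t")
    case True
    then have "t \<noteq> 0" using \<open>0 < c0\<close> l1norm_pos_iff[of t] by auto
    have "(\<integral>\<^sup>+ \<omega>. ennreal (\<psi> (M \<omega> t)) * ennreal (X \<omega> t) \<partial>P) \<le> ennreal (\<theta> * \<psi> t)"
      unfolding \<psi>_def using \<open>0 < B * c0 powr a\<close> \<open>0 < B\<close> \<open>0 \<le> \<theta>\<close> \<open>t \<noteq> 0\<close>
      by (intro nn_integral_tail_barrier_le[OF X_meas M_meas] moment_X moment_MX) simp_all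
    then have "\<phi> t \<le> \<theta> * (\<psi> t + e)"
      using X_meas M_meas X_nonneg \<psi>_nonneg that recursion[OF True] moment_X[OF \<open>t \<noteq> 0\<close>] \<open>0 \<le> \<theta>\<close>
      by (intro recursive_le_supersolution_step[where P = P and X = X and M = M]) (simp_all add: \<psi>_def)
    also have "\<dots> \<le> \<psi> t + \<theta> * e"
      using \<open>\<theta> < 1\<close> \<open>0 \<le> \<theta>\<close> \<psi>_nonneg[of t] by (simp add: distrib_left mult_left_le_one_le)
    finally show ?thesis .
  next
    case False
    then have "\<psi> t = B"
      unfolding \<psi>_def using \<open>0 < a\<close> \<open>0 < c0\<close> \<open>0 < B\<close> by (simp add: tail_barrier_eq_bound)
    then show ?thesis
      using \<phi>_le[of t] \<open>0 \<le> \<theta>\<close> \<open>0 \<le> e\<close> by (simp add: add_increasing2)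
  qed
  show ?thesis
    unfolding \<psi>_def[symmetric] using \<open>0 \<le> \<theta>\<close> \<open>\<theta> < 1\<close> \<open>0 < B\<close> \<phi>_le \<psi>_nonneg
    by (intro le_if_error_contracts[where B = B, OF _ _ _ _ contract]) (auto intro: add_increasing)
qed

theorem lemma4p6:
  fixes P :: "'w measure"
    and X :: "'w \<Rightarrow> real ^ 'n \<Rightarrow> real"
    and M :: "'w \<Rightarrow> real ^ 'n \<Rightarrow> real ^ 'n"
    and \<phi> :: "real ^ 'n \<Rightarrow> real"
    and a c0 :: real
  assumes "prob_space P"
    and X_meas: "\<And>t. (\<lambda>\<omega>. X \<omega> t) \<in> borel_measurable P"
    and M_meas: "\<And>t. (\<lambda>\<omega>. M \<omega> t) \<in> borel_measurable P"
    and X_nonneg: "\<And>\<omega> t. X \<omega> t \<ge> 0"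
    and X_hom: "\<And>\<omega> t c. t \<noteq> 0 \<Longrightarrow> c > 0 \<Longrightarrow> X \<omega> (c *\<^sub>R t) = X \<omega> t"
    and M_hom: "\<And>\<omega> t c. t \<noteq> 0 \<Longrightarrow> c > 0 \<Longrightarrow> M \<omega> (c *\<^sub>R t) = c *\<^sub>R M \<omega> t"
    and a_pos: "a > 0"
    and supX: "(SUP t\<in>UNIV - {0}. \<integral>\<^sup>+ \<omega>. ennreal (X \<omega> t) \<partial>P) < 1"
    and supMX: "(SUP t\<in>l1sphere. \<integral>\<^sup>+ \<omega>. l1negpow a (M \<omega> t) * ennreal (X \<omega> t) \<partial>P) < 1"
    and phi_meas: "\<phi> \<in> borel_measurable borel"
    and phi_nonneg: "\<And>t. \<phi> t \<ge> 0"
    and phi_bdd: "\<exists>B. \<forall>t. \<phi> t \<le> B"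
    and c0_pos: "c0 > 0"
    and phi_ineq: "\<And>t. l1norm t > c0 \<Longrightarrow>
        ennreal (\<phi> t) \<le> (\<integral>\<^sup>+ \<omega>. ennreal (\<phi> (M \<omega> t) * X \<omega> t) \<partial>P)"
  shows "\<exists>C R. \<forall>t. l1norm t > R \<longrightarrow> \<phi> t \<le> C * l1norm t powr (- a)"
proof -
  obtain B0 where B0: "\<And>t. \<phi> t \<le> B0" using phi_bdd by blast
  define B where "B = max B0 1"
  have B: "\<And>t. \<phi> t \<le> B" "0 < B" using B0 by (auto simp: B_def le_max_iff_disj)
  obtain \<theta> where "0 \<le> \<theta>" "\<theta> < 1"
    and \<theta>_ge: "(SUP t\<in>UNIV - {0}. \<integral>\<^sup>+ \<omega>. ennreal (X \<omega> t) \<partial>P) \<le> ennreal \<theta>"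
      "(SUP t\<in>l1sphere. \<integral>\<^sup>+ \<omega>. l1negpow a (M \<omega> t) * ennreal (X \<omega> t) \<partial>P) \<le> ennreal \<theta>"
    using ennreal_lt_1_common_bound[OF supX supMX] by blast
  have moment_X: "(\<integral>\<^sup>+ \<omega>. ennreal (X \<omega> t) \<partial>P) \<le> ennreal \<theta>" if "t \<noteq> 0" for t
    using that by (intro order_trans[OF SUP_upper \<theta>_ge(1)]) auto
  have moment_MX: "(\<integral>\<^sup>+ \<omega>. l1negpow a (M \<omega> t) * ennreal (X \<omega> t) \<partial>P)
      \<le> ennreal (l1norm t powr - a) * ennreal \<theta>" if "t \<noteq> 0" for t
    using nn_integral_l1negpow_le_SUP_l1sphere[OF X_meas M_meas X_hom M_hom that] \<theta>_ge(2)
    by (rule order_trans[OF _ mult_left_mono]) (simp_all add: zero_le)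
  have "\<phi> t \<le> B * c0 powr a * l1norm t powr - a" if "c0 < l1norm t" for t
    using le_tail_barrier[OF X_meas M_meas X_nonneg a_pos c0_pos \<open>0 < B\<close> \<open>0 \<le> \<theta>\<close> \<open>\<theta> < 1\<close>
        moment_X moment_MX B(1) phi_ineq, of t]
      tail_barrier_le_l1norm_powr[of t a "B * c0 powr a" B] that c0_pos l1norm_pos_iff[of t]
    by auto
  then show ?thesis by blast
qed

end
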